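(* Let $L$ be the infinite matrix with entries $L_{i,j}=l_{i,j}$ for $i\ge j\ge0$ and $L_{i,j}=0$ for $j>i$, let $M$ be the infinite matrix with entries $M_{i,j}=l_{i+j,j}$ ($i,j\ge0$), and let $U$ be the infinite upper-triangular matrix with entries $U_{i,j}=\binom{j}{i}$ ($i,j\geq0$). Then $M=LU$ (the product being well defined since each entry is a finite sum). In particular, for every $n\ge1$, the square matrix $M(n)$ formed by the first $n$ rows and columns of $M$ satisfies $\det M(n)=1$.
   Context: For $i,j\in\mathbb N$ with $j\le i$, $l_{i,j}=\sum_{k=0}^{i-j}\binom{\frac{i-1}{2}+x-k}{k}\binom{\frac{i-1}{2}+k-x}{i-j-k}$, where $\binom{z}{k}=\frac{z(z-1)\cdots(z-k+1)}{k!}$; this sum is a polynomial in $x$ which is constant in $x$, so $l_{i,j}$ is a well-defined number (e.g. its value at $x=0$). These numbers form a Pascal-like triangle starting with rows $1$; $-1,1$; $1,0,1$; $-1,1,1,1$; $1,0,2,2,1$. *)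

theory Defs
  imports Complex_Main "Jordan_Normal_Form.Determinant"
begin

definition lpoly :: "nat \<Rightarrow> nat \<Rightarrow> real \<Rightarrow> real" where
  "lpoly i j x = (\<Sum>k = 0..i - j.
      (((real i - 1) / 2 + x - real k) gchoose k) *
      (((real i - 1) / 2 + real k - x) gchoose (i - j - k)))"

text \<open>l i j is the (constant) value of that polynomial, taken at x = 0.\<close>
definition lcoef :: "nat \<Rightarrow> nat \<Rightarrow> real" where
  "lcoef i j = lpoly i j 0"

definition Lmat :: "nat \<Rightarrow> nat \<Rightarrow> real" where
  "Lmat i j = (if j \<le> i then lcoef i j else 0)"

definition Mmat :: "nat \<Rightarrow> nat \<Rightarrow> real" where
  "Mmat i j = lcoef (i + j) j"

definition Umat :: "nat \<Rightarrow> nat \<Rightarrow> real" where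
  "Umat i j = real (j choose i)"

end

theory Submission
  imports Defs "HOL-Computational_Algebra.Formal_Power_Series"
begin

text \<open>
  Write \<open>l\<^sub>i\<^sub>,\<^sub>j\<close> as \<open>G s m u = \<Sum>\<^sub>k binom(u - k, k) binom(s - u + k, m - k)\<close> with
  \<open>s = i - 1\<close>, \<open>m = i - j\<close>, \<open>u = (i - 1)/2 + x\<close>. Pascal's rule in both factors gives
  \<open>G(m+1, u+1) = G(m+1, u) + G(m, u-1) - G(m, u+1)\<close>, so by induction on \<open>m\<close> the
  function \<open>G\<close> is 1-periodic in \<open>u\<close>; being a polynomial in \<open>u\<close> it is constant.
  Consequently \<open>l\<^sub>i\<^sub>+\<^sub>j\<^sub>,\<^sub>j = G(i - 1 + j, i, j)\<close>, and expanding the second factor by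
  Vandermonde's identity and shifting the summation index turns this into
  \<open>\<Sum>\<^sub>r binom(j, r) G(i - 1, i - r, 0) = \<Sum>\<^sub>r l\<^sub>i\<^sub>,\<^sub>r binom(j, r)\<close>, i.e. \<open>M = LU\<close>.
  Both factors are unitriangular (\<open>l\<^sub>i\<^sub>,\<^sub>i = G(i - 1, 0, _) = 1\<close>), so \<open>det M(n) = 1\<close>.
\<close>

definition ibinom :: "real \<Rightarrow> int \<Rightarrow> real" where
  "ibinom z n = (if n < 0 then 0 else z gchoose nat n)"

lemma ibinom_neg [simp]: "n < 0 \<Longrightarrow> ibinom z n = 0"
  by (simp add: ibinom_def)

lemma ibinom_0 [simp]: "ibinom z 0 = 1"
  by (simp add: ibinom_def)

lemma ibinom_pascal: "ibinom (z + 1) n = ibinom z n + ibinom z (n - 1)"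
proof (cases "n \<le> 0")
  case True
  then show ?thesis by (cases "n = 0") auto
next
  case False
  then have "nat n = Suc (nat (n - 1))" by simp
  with False show ?thesis by (simp add: ibinom_def gbinomial_Suc_Suc)
qed

lemma ibinom_Vandermonde:
  "ibinom (z + real j) q = (\<Sum>r\<le>j. real (j choose r) * ibinom z (q - int r))"
proof (cases "q < 0")
  case True
  then show ?thesis by simp
next
  case False
  then obtain n where q: "q = int n" by (metis nonneg_int_cases not_less)
  have "ibinom (z + real j) q = (\<Sum>k\<in>{0..n}. (real j gchoose k) * (z gchoose (n - k)))"
    by (simp add: ibinom_def q add.commute gbinomial_Vandermonde)
  also have "\<dots> = (\<Sum>k\<le>n. real (j choose k) * ibinom z (q - int k))"
    by (rule sum.cong) (auto simp: q ibinom_def binomial_gbinomial nat_diff_distrib)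
  also have "\<dots> = (\<Sum>k\<le>n + j. real (j choose k) * ibinom z (q - int k))"
    by (rule sum.mono_neutral_right[symmetric]) (auto simp: q)
  also have "\<dots> = (\<Sum>k\<le>j. real (j choose k) * ibinom z (q - int k))"
    by (rule sum.mono_neutral_right) auto
  finally show ?thesis .
qed

lemma ibinom_affine_poly: "\<exists>p. \<forall>u. ibinom (c + e * u) n = poly p u"
proof (cases "n < 0")
  case True
  then show ?thesis by (intro exI[of _ 0]) simp
next
  case False
  define p where "p = smult (1 / fact (nat n)) (\<Prod>i = 0..<nat n. [:c - of_nat i, e:])"
  have "ibinom (c + e * u) n = poly p u" for u
    using False by (simp add: ibinom_def p_def gbinomial_prod_rev poly_prod algebra_simps)
  then show ?thesis by blast
qed

lemma sum_poly_functions: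
  assumes "\<And>k. \<exists>p. \<forall>u. f k u = poly p u"
  shows "\<exists>p. \<forall>u. (\<Sum>k\<in>A. f k u) = poly p u"
proof -
  from assms obtain P where "\<And>k u. f k u = poly (P k) u" by metis
  then show ?thesis by (intro exI[of _ "sum P A"]) (simp add: poly_sum)
qed

lemma poly_const_if_const_on_nat:
  fixes p :: "real poly"
  assumes "\<And>n. poly p (real n) = c"
  shows "poly p x = c"
proof -
  have "p - [:c:] = 0"
  proof (rule ccontr)
    assume "p - [:c:] \<noteq> 0"
    then have "finite {x. poly (p - [:c:]) x = 0}" by (rule poly_roots_finite)
    moreover have "range real \<subseteq> {x. poly (p - [:c:]) x = 0}" using assms by auto
    moreover have "infinite (range real)" by (rule range_inj_infinite) (simp add: inj_on_def)
    ultimately show False using finite_subset by blast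
  qed
  then have "poly (p - [:c:]) x = 0" by simp
  then show ?thesis by simp
qed

lemma sum_int_shift: "(\<Sum>k\<in>{a..b::int}. f k) = (\<Sum>k\<in>{a - c..b - c}. f (k + c))"
  by (rule sum.reindex_bij_witness[of _ "\<lambda>k. k + c" "\<lambda>k. k - c"]) auto

definition G :: "real \<Rightarrow> int \<Rightarrow> real \<Rightarrow> real" where
  "G s m u = (\<Sum>k\<in>{0..m}. ibinom (u - of_int k) k * ibinom (s - u + of_int k) (m - k))"

lemma G_neg: "m < 0 \<Longrightarrow> G s m u = 0"
  by (simp add: G_def)

lemma G_0: "G s 0 u = 1"
  by (simp add: G_def)

lemma G_extend_range:
  assumes "a \<le> 0" "m \<le> b"
  shows "G s m u = (\<Sum>k\<in>{a..b}. ibinom (u - of_int k) k * ibinom (s - u + of_int k) (m - k))"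
  unfolding G_def by (rule sum.mono_neutral_right[symmetric]) (use assms in auto)

lemma G_recurrence: "G s (m + 1) (u + 1) = G s (m + 1) u + G s m (u - 1) - G s m (u + 1)"
proof -
  let ?X = "\<lambda>k. ibinom (u - of_int k) k * ibinom (s - u + of_int k) (m + 1 - k)"
  let ?Y = "\<lambda>k. ibinom (u - of_int k) (k - 1) * ibinom (s - u + of_int k) (m + 1 - k)"
  let ?Z = "\<lambda>k. ibinom (u + 1 - of_int k) k * ibinom (s - (u + 1) + of_int k) (m - k)"
  have summand: "ibinom (u + 1 - of_int k) k * ibinom (s - (u + 1) + of_int k) (m + 1 - k)
      = ?X k + ?Y k - ?Z k" for k
  proof -
    have "ibinom (u + 1 - of_int k) k = ibinom (u - of_int k) k + ibinom (u - of_int k) (k - 1)"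
      using ibinom_pascal[of "u - of_int k" k] by (simp add: algebra_simps)
    moreover have "ibinom (s - u + of_int k) (m + 1 - k)
        = ibinom (s - (u + 1) + of_int k) (m + 1 - k) + ibinom (s - (u + 1) + of_int k) (m - k)"
      using ibinom_pascal[of "s - (u + 1) + of_int k" "m + 1 - k"] by (simp add: algebra_simps)
    ultimately show ?thesis by (simp add: algebra_simps)
  qed
  have "G s (m + 1) (u + 1) = (\<Sum>k\<in>{-1..m+1}. ?X k) + (\<Sum>k\<in>{-1..m+1}. ?Y k) - (\<Sum>k\<in>{-1..m+1}. ?Z k)"
    by (subst G_extend_range[of "-1" _ "m + 1"]) (auto simp: summand sum.distrib sum_subtractf)
  also have "(\<Sum>k\<in>{-1..m+1}. ?X k) = G s (m + 1) u"
    by (rule G_extend_range[symmetric]) auto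
  also have "(\<Sum>k\<in>{-1..m+1}. ?Z k) = G s m (u + 1)"
    by (rule G_extend_range[symmetric]) auto
  also have "(\<Sum>k\<in>{-1..m+1}. ?Y k) = (\<Sum>k\<in>{-2..m}. ?Y (k + 1))"
    using sum_int_shift[of ?Y "-1" "m + 1" 1] by simp
  also have "\<dots> = (\<Sum>k\<in>{-2..m}. ibinom (u - 1 - of_int k) k * ibinom (s - (u - 1) + of_int k) (m - k))"
    by (rule sum.cong) (auto simp: algebra_simps)
  also have "\<dots> = G s m (u - 1)"
    by (rule G_extend_range[symmetric]) auto
  finally show ?thesis by simp
qed

lemma G_periodic: "G s m (u + 1) = G s m u"
proof (cases "m < 0")
  case True
  then show ?thesis by (simp add: G_neg)
next
  case False
  have "G s (int n) (u + 1) = G s (int n) u" for n u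
  proof (induction n arbitrary: u)
    case 0
    then show ?case by (simp add: G_0)
  next
    case (Suc n)
    have "G s (int n) (u - 1) = G s (int n) u" using Suc.IH[of "u - 1"] by simp
    then show ?case using G_recurrence[of s "int n" u] Suc.IH[of u] by (simp add: add.commute)
  qed
  with False show ?thesis by (metis nonneg_int_cases not_less)
qed

lemma G_shift_nat: "G s m (u + real n) = G s m u"
proof (induction n)
  case (Suc n)
  have "u + real (Suc n) = (u + real n) + 1" by simp
  with Suc show ?case by (metis G_periodic)
qed simp

lemma G_poly: "\<exists>p. \<forall>u. G s m u = poly p u"
  unfolding G_def
proof (rule sum_poly_functions)
  fix k
  obtain p1 where "\<forall>u. ibinom (- of_int k + 1 * u) k = poly p1 u"
    using ibinom_affine_poly by blast
  moreover obtain p2 where "\<forall>u. ibinom ((s + of_int k) + (-1) * u) (m - k) = poly p2 u"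
    using ibinom_affine_poly by blast
  ultimately show "\<exists>p. \<forall>u. ibinom (u - of_int k) k * ibinom (s - u + of_int k) (m - k) = poly p u"
    by (intro exI[of _ "p1 * p2"]) (auto simp: algebra_simps)
qed

lemma G_const: "G s m u = G s m v"
proof -
  obtain p where p: "\<And>u. G s m u = poly p u" using G_poly by blast
  have "poly p x = G s m 0" for x
    by (rule poly_const_if_const_on_nat) (metis G_shift_nat add_0 p)
  then show ?thesis by (metis p)
qed

lemma G_Vandermonde_shift:
  "G (s + real j) m (u + real j) = (\<Sum>r\<le>j. real (j choose r) * G s (m - int r) u)"
proof -
  have "G (s + real j) m (u + real j) = (\<Sum>q\<in>{0..m}.
      (\<Sum>r\<le>j. real (j choose r) * ibinom (u - of_int q) (q - int r)) * ibinom (s - u + of_int q) (m - q))"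
    unfolding G_def by (rule sum.cong) (auto simp: ibinom_Vandermonde[symmetric] algebra_simps)
  also have "\<dots> = (\<Sum>r\<le>j. real (j choose r) *
      (\<Sum>q\<in>{0..m}. ibinom (u - of_int q) (q - int r) * ibinom (s - u + of_int q) (m - q)))"
    by (simp add: sum_distrib_left sum_distrib_right sum.swap[of _ "{0..m}"] mult.assoc)
  also have "\<dots> = (\<Sum>r\<le>j. real (j choose r) * G s (m - int r) (u - real r))"
  proof (rule sum.cong[OF refl])
    fix r
    have "G s (m - int r) (u - real r) = (\<Sum>k\<in>{- int r..m - int r}.
        ibinom (u - real r - of_int k) k * ibinom (s - (u - real r) + of_int k) (m - int r - k))"
      by (rule G_extend_range) auto
    also have "\<dots> = (\<Sum>q\<in>{0..m}. ibinom (u - of_int q) (q - int r) * ibinom (s - u + of_int q) (m - q))"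
      by (subst sum_int_shift[where c = "- int r"]) (auto simp: algebra_simps intro!: sum.cong)
    finally show "real (j choose r) * (\<Sum>q\<in>{0..m}. ibinom (u - of_int q) (q - int r) *
        ibinom (s - u + of_int q) (m - q)) = real (j choose r) * G s (m - int r) (u - real r)"
      by simp
  qed
  finally show ?thesis by (metis (no_types, lifting) G_const sum.cong)
qed

lemma lcoef_eq_G: "lcoef i j = G (real i - 1) (int (i - j)) u"
proof -
  have "lcoef i j = G (real i - 1) (int (i - j)) ((real i - 1) / 2)"
    unfolding lcoef_def lpoly_def G_def
  proof (rule sum.reindex_bij_witness[of _ nat int])
    fix k assume "k \<in> {0..i - j}"
    then have "int (i - j) - int k = int (i - j - k)" by auto
    moreover have "real i - 1 - (real i - 1) / 2 + real_of_int (int k) = (real i - 1) / 2 + real k - 0"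
      by (simp add: field_simps)
    ultimately show "ibinom ((real i - 1) / 2 - real_of_int (int k)) (int k) *
        ibinom (real i - 1 - (real i - 1) / 2 + real_of_int (int k)) (int (i - j) - int k) =
        ((real i - 1) / 2 + 0 - real k gchoose k) * ((real i - 1) / 2 + real k - 0 gchoose (i - j - k))"
      by (simp only:) (simp add: ibinom_def)
  qed auto
  then show ?thesis by (metis G_const)
qed

lemma Mmat_eq_LU_entry: "Mmat i j = (\<Sum>k\<le>i. Lmat i k * Umat k j)"
proof -
  let ?s = "real i - 1"
  have "Mmat i j = G (?s + real j) (int i) (0 + real j)"
    by (simp add: Mmat_def lcoef_eq_G[of _ _ "real j"] algebra_simps)
  also have "\<dots> = (\<Sum>r\<le>j. real (j choose r) * G ?s (int i - int r) 0)"
    by (rule G_Vandermonde_shift)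
  also have "\<dots> = (\<Sum>r\<le>i + j. real (j choose r) * G ?s (int i - int r) 0)"
    by (rule sum.mono_neutral_right[symmetric]) auto
  also have "\<dots> = (\<Sum>r\<le>i. real (j choose r) * G ?s (int i - int r) 0)"
    by (rule sum.mono_neutral_right) (auto simp: G_neg)
  also have "\<dots> = (\<Sum>k\<le>i. Lmat i k * Umat k j)"
    by (rule sum.cong) (auto simp: Lmat_def Umat_def lcoef_eq_G[of i _ 0] of_nat_diff)
  finally show ?thesis .
qed

lemma Mmat_LU_factorization:
  "mat n n (\<lambda>(i, j). Mmat i j) = mat n n (\<lambda>(i, j). Lmat i j) * mat n n (\<lambda>(i, j). Umat i j)"
proof (rule eq_matI)
  fix i j assume "i < dim_row (mat n n (\<lambda>(i, j). Lmat i j) * mat n n (\<lambda>(i, j). Umat i j))"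
    and "j < dim_col (mat n n (\<lambda>(i, j). Lmat i j) * mat n n (\<lambda>(i, j). Umat i j))"
  then have i: "i < n" and j: "j < n" by auto
  have "(\<Sum>k\<in>{0..<n}. Lmat i k * Umat k j) = (\<Sum>k\<le>i. Lmat i k * Umat k j)"
    by (rule sum.mono_neutral_right) (use i in \<open>auto simp: Lmat_def\<close>)
  with i j show "mat n n (\<lambda>(i, j). Mmat i j) $$ (i, j)
      = (mat n n (\<lambda>(i, j). Lmat i j) * mat n n (\<lambda>(i, j). Umat i j)) $$ (i, j)"
    by (simp add: scalar_prod_def Mmat_eq_LU_entry)
qed auto

lemma det_Lmat: "det (mat n n (\<lambda>(i, j). Lmat i j)) = 1"
  by (subst det_lower_triangular[of n])
    (auto simp: Lmat_def prod_list_diag_prod lcoef_eq_G[of _ _ 0] G_0)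

lemma det_Umat: "det (mat n n (\<lambda>(i, j). Umat i j)) = 1"
  by (subst det_upper_triangular[of _ n]) (auto simp: upper_triangular_def Umat_def prod_list_diag_prod)

theorem proposition4p5:
  shows "(\<forall>i j. Mmat i j = (\<Sum>k\<le>i. Lmat i k * Umat k j))
       \<and> (\<forall>n::nat. n \<ge> 1 \<longrightarrow> det (mat n n (\<lambda>(i, j). Mmat i j)) = 1)"
proof (intro conjI allI impI)
  show "Mmat i j = (\<Sum>k\<le>i. Lmat i k * Umat k j)" for i j
    by (rule Mmat_eq_LU_entry)
  show "det (mat n n (\<lambda>(i, j). Mmat i j)) = 1" for n
    by (simp add: Mmat_LU_factorization det_mult[of _ n] det_Lmat det_Umat)
qed

end
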